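(* Let $\Gamma$ be a finitely generated group, let $\Gamma=\Gamma_0\ge\Gamma_1\ge\cdots$ be a chain of normal subgroups of finite index in $\Gamma$, and let $f$ be the boundary action of $\Gamma$ with respect to $(\Gamma_n)$. Then $f$ is strongly ergodic if and only if it has spectral gap.
   Context: A chain in $\Gamma$ is a sequence $\Gamma=\Gamma_0\ge\Gamma_1\ge\cdots$ of finite index subgroups. The coset tree $T(\Gamma,(\Gamma_n))$ has as vertices the right cosets $\Gamma_n g$ ($n\ge0$, $g\in\Gamma$), with $\Gamma_n g$ joined to $\Gamma_{n+1}h$ when $\Gamma_{n+1}h\subseteq\Gamma_n g$; $\Gamma$ acts on it by right multiplication. Its boundary $\partial T$ is the set of infinite rays from the root, with the topology generated by shadows $\mathrm{Sh}(\Gamma_n g)$ (rays through $\Gamma_n g$) and the Borel probability measure $\mu$ with $\mu(\mathrm{Sh}(\Gamma_ng))=1/|\Gamma:\Gamma_n|$. The boundary action is the induced measure preserving action of $\Gamma$ on $(\partial T,\mu)$. An action on $(X,\mu)$ is strongly ergodic if it is ergodic and every sequence $A_n$ of measurable sets with $\mu(A_n\setminus A_n\gamma)\to0$ for all $\gamma$ satisfies $\mu(A_n)(1-\mu(A_n))\to0$. It has spectral gap if there is no sequence $A_n$ of measurable sets of positive measure with $\mu(A_n\gamma\setminus A_n)/\mu(A_n)\to0$ for all $\gamma\in\Gamma$ (equivalently, the Koopman representation on $L^2_0(X,\mu)$ has no almost invariant vectors). *)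

theory Defs
  imports "HOL-Probability.Probability" "HOL-Algebra.Generated_Groups" "HOL-Algebra.Coset"
begin

definition fin_gen_group :: "('a, 'b) monoid_scheme \<Rightarrow> bool" where
  "fin_gen_group G \<longleftrightarrow> group G \<and>
     (\<exists>S. finite S \<and> S \<subseteq> carrier G \<and> generate G S = carrier G)"

definition normal_fi_chain :: "('a, 'b) monoid_scheme \<Rightarrow> (nat \<Rightarrow> 'a set) \<Rightarrow> bool" where
  "normal_fi_chain G \<Gamma> \<longleftrightarrow> \<Gamma> 0 = carrier G \<and> (\<forall>n. \<Gamma> (Suc n) \<subseteq> \<Gamma> n)
     \<and> (\<forall>n. \<Gamma> n \<lhd> G) \<and> (\<forall>n. finite (rcosets\<^bsub>G\<^esub> (\<Gamma> n)))"

definition chain_index :: "('a, 'b) monoid_scheme \<Rightarrow> (nat \<Rightarrow> 'a set) \<Rightarrow> nat \<Rightarrow> nat" where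
  "chain_index G \<Gamma> n = card (rcosets\<^bsub>G\<^esub> (\<Gamma> n))"

text \<open>Boundary of the coset tree: infinite rays from the root, i.e. sequences of right
  cosets Gamma_n g_n with Gamma_(n+1) g_(n+1) contained in Gamma_n g_n.\<close>
definition tree_boundary :: "('a, 'b) monoid_scheme \<Rightarrow> (nat \<Rightarrow> 'a set) \<Rightarrow> (nat \<Rightarrow> 'a set) set" where
  "tree_boundary G \<Gamma> = {x. (\<forall>n. x n \<in> rcosets\<^bsub>G\<^esub> (\<Gamma> n)) \<and> (\<forall>n. x (Suc n) \<subseteq> x n)}"

definition shadow :: "('a, 'b) monoid_scheme \<Rightarrow> (nat \<Rightarrow> 'a set) \<Rightarrow> nat \<Rightarrow> 'a set \<Rightarrow> (nat \<Rightarrow> 'a set) set" where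
  "shadow G \<Gamma> n c = {x \<in> tree_boundary G \<Gamma>. x n = c}"

definition shadows :: "('a, 'b) monoid_scheme \<Rightarrow> (nat \<Rightarrow> 'a set) \<Rightarrow> (nat \<Rightarrow> 'a set) set set" where
  "shadows G \<Gamma> = {shadow G \<Gamma> n c | n c. c \<in> rcosets\<^bsub>G\<^esub> (\<Gamma> n)}"

text \<open>M is the boundary measure: Borel sigma-algebra generated by the shadows
  (which form a base of the topology), and mu(Sh(Gamma_n g)) = 1/|Gamma:Gamma_n|.
  (Such a measure exists and is unique by Caratheodory.)\<close>
definition is_boundary_measure ::
  "('a, 'b) monoid_scheme \<Rightarrow> (nat \<Rightarrow> 'a set) \<Rightarrow> (nat \<Rightarrow> 'a set) measure \<Rightarrow> bool" where
  "is_boundary_measure G \<Gamma> M \<longleftrightarrow>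
     space M = tree_boundary G \<Gamma> \<and>
     sets M = sigma_sets (tree_boundary G \<Gamma>) (shadows G \<Gamma>) \<and>
     (\<forall>n c. c \<in> rcosets\<^bsub>G\<^esub> (\<Gamma> n) \<longrightarrow>
        emeasure M (shadow G \<Gamma> n c) = ennreal (1 / real (chain_index G \<Gamma> n)))"

definition ray_act :: "('a, 'b) monoid_scheme \<Rightarrow> (nat \<Rightarrow> 'a set) \<Rightarrow> 'a \<Rightarrow> (nat \<Rightarrow> 'a set)" where
  "ray_act G x \<gamma> = (\<lambda>n. x n #>\<^bsub>G\<^esub> \<gamma>)"

definition set_act :: "('a, 'b) monoid_scheme \<Rightarrow> (nat \<Rightarrow> 'a set) set \<Rightarrow> 'a \<Rightarrow> (nat \<Rightarrow> 'a set) set" where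
  "set_act G A \<gamma> = (\<lambda>x. ray_act G x \<gamma>) ` A"

definition boundary_ergodic ::
  "('a, 'b) monoid_scheme \<Rightarrow> (nat \<Rightarrow> 'a set) measure \<Rightarrow> bool" where
  "boundary_ergodic G M \<longleftrightarrow>
     (\<forall>A \<in> sets M. (\<forall>\<gamma> \<in> carrier G. set_act G A \<gamma> = A) \<longrightarrow>
        measure M A = 0 \<or> measure M A = 1)"

definition strongly_ergodic ::
  "('a, 'b) monoid_scheme \<Rightarrow> (nat \<Rightarrow> 'a set) measure \<Rightarrow> bool" where
  "strongly_ergodic G M \<longleftrightarrow> boundary_ergodic G M \<and>
     (\<forall>A :: nat \<Rightarrow> (nat \<Rightarrow> 'a set) set. (\<forall>n. A n \<in> sets M) \<longrightarrow>
        (\<forall>\<gamma> \<in> carrier G. (\<lambda>n. measure M (A n - set_act G (A n) \<gamma>)) \<longlonglongrightarrow> 0) \<longrightarrow>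
        (\<lambda>n. measure M (A n) * (1 - measure M (A n))) \<longlonglongrightarrow> 0)"

definition spectral_gap ::
  "('a, 'b) monoid_scheme \<Rightarrow> (nat \<Rightarrow> 'a set) measure \<Rightarrow> bool" where
  "spectral_gap G M \<longleftrightarrow>
     \<not> (\<exists>A :: nat \<Rightarrow> (nat \<Rightarrow> 'a set) set.
          (\<forall>n. A n \<in> sets M \<and> 0 < measure M (A n) \<and> measure M (A n) \<le> 1/2) \<and>
          (\<forall>\<gamma> \<in> carrier G.
             (\<lambda>n. measure M (set_act G (A n) \<gamma> - A n) / measure M (A n)) \<longlonglongrightarrow> 0))"

end

theory Submission
  imports Defs
begin

text \<open>
  Spectral gap implies strong ergodicity in general: if sets \<open>A\<^sub>n\<close> are almost
  invariant while \<open>\<mu>(A\<^sub>n)(1 - \<mu>(A\<^sub>n))\<close> stays away from 0, then, after passing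
  to a subsequence and replacing sets of measure \<open>> 1/2\<close> by their complements, they
  violate the spectral gap condition.

  Strong ergodicity implies spectral gap thanks to normality.  Left multiplication by
  \<open>g \<in> \<Gamma>\<close> is then a measure preserving automorphism of the coset tree commuting with
  the action.  Approximating measurable sets by cylinders (finite unions of shadows) and
  averaging over the finite quotient \<open>\<Gamma>/\<Gamma>\<^sub>L\<close> shows that some left translate \<open>gA\<close>
  is almost independent of any given set \<open>C\<close> (mixing lemma).  Given small sets \<open>A\<^sub>n\<close>
  whose boundary \<open>\<mu>(A\<^sub>n\<gamma> - A\<^sub>n)\<close> is small relative to \<open>\<mu>(A\<^sub>n)\<close>, a greedy union of
  about \<open>1/\<mu>(A\<^sub>n)\<close> left translates of \<open>A\<^sub>n\<close> has measure in \<open>[1/4, 3/4]\<close> and is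
  almost invariant, contradicting strong ergodicity.
\<close>

text \<open>The left coset notation \<open><#\<close> of HOL-Algebra clashes with multiset inclusion.\<close>
no_notation Multiset.subset_mset (infix "<#" 50)

lemma exists_le_average:
  fixes f :: "'a \<Rightarrow> nat"
  assumes "finite A" "A \<noteq> {}"
  shows "\<exists>a\<in>A. f a * card A \<le> sum f A"
proof (rule ccontr)
  assume "\<not> ?thesis"
  then have "(\<Sum>a\<in>A. sum f A) < (\<Sum>a\<in>A. f a * card A)"
    using assms by (intro sum_strict_mono) (auto simp: not_le)
  also have "\<dots> = sum f A * card A" by (simp add: sum_distrib_right)
  finally show False by simp
qed

lemma subsequence_bounded_away:
  fixes f :: "nat \<Rightarrow> real"
  assumes "\<not> f \<longlonglongrightarrow> 0"
  shows "\<exists>e>0. \<exists>\<sigma>::nat \<Rightarrow> nat. strict_mono \<sigma> \<and> (\<forall>k. e \<le> \<bar>f (\<sigma> k)\<bar>)"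
proof -
  have "\<exists>e>0. \<forall>N. \<exists>n\<ge>N. e \<le> \<bar>f n\<bar>"
  proof (rule ccontr)
    assume "\<not> ?thesis"
    then have "\<forall>e>0. \<exists>N. \<forall>n\<ge>N. \<bar>f n\<bar> < e" by (meson not_le)
    then have "f \<longlonglongrightarrow> 0" unfolding LIMSEQ_def dist_real_def by simp
    with assms show False ..
  qed
  then obtain e where e: "e > 0" "\<forall>N. \<exists>n\<ge>N. e \<le> \<bar>f n\<bar>" by blast
  then have "infinite {n. e \<le> \<bar>f n\<bar>}"
    unfolding infinite_nat_iff_unbounded_le by simp
  from infinite_enumerate[OF this] obtain \<sigma> :: "nat \<Rightarrow> nat"
    where "strict_mono \<sigma> \<and> (\<forall>k. \<sigma> k \<in> {n. e \<le> \<bar>f n\<bar>})" ..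
  then show ?thesis using e(1) by auto
qed

lemma balanced_variance_bound:
  fixes m :: real
  assumes "1/4 \<le> m" "m \<le> 3/4"
  shows "3/16 \<le> m * (1 - m)"
proof -
  have "0 \<le> (m - 1/4) * (3/4 - m)" using assms by (intro mult_nonneg_nonneg) auto
  moreover have "m * (1 - m) - 3/16 = (m - 1/4) * (3/4 - m)" by (simp add: field_simps)
  ultimately show ?thesis by linarith
qed

lemma product_perturbation:
  fixes u v a c d :: real
  assumes "u \<le> a + d" "v \<le> c + d" "0 \<le> u" "u \<le> 1" "0 \<le> c" "c \<le> 1" "0 \<le> d"
  shows "u * v \<le> a * c + 2 * d"
proof -
  have "u * v \<le> u * (c + d)" using assms by (intro mult_left_mono) auto
  also have "\<dots> \<le> u * c + d" using assms by (simp add: distrib_left mult_left_le_one_le)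
  also have "u * c \<le> (a + d) * c" using assms by (intro mult_right_mono) auto
  also have "\<dots> \<le> a * c + d" using assms by (simp add: distrib_right mult_right_le_one_le)
  finally show ?thesis by simp
qed

locale boundary_action = group G for G :: "('a,'b) monoid_scheme" (structure) +
  fixes \<Gamma> :: "nat \<Rightarrow> 'a set" and M :: "(nat \<Rightarrow> 'a set) measure"
  assumes chain: "normal_fi_chain G \<Gamma>"
    and boundary_measure: "is_boundary_measure G \<Gamma> M"
begin

abbreviation level :: "nat \<Rightarrow> 'a set set" where "level n \<equiv> rcosets (\<Gamma> n)"
abbreviation Bd :: "(nat \<Rightarrow> 'a set) set" where "Bd \<equiv> tree_boundary G \<Gamma>"
abbreviation index :: "nat \<Rightarrow> nat" where "index n \<equiv> chain_index G \<Gamma> n"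

subsection \<open>The coset tree\<close>

lemma chain_normal: "\<Gamma> n \<lhd> G"
  using chain unfolding normal_fi_chain_def by auto

lemma chain_subgroup: "subgroup (\<Gamma> n) G"
  using chain_normal normal_imp_subgroup by blast

lemma chain_subset: "\<Gamma> n \<subseteq> carrier G"
  using chain_subgroup subgroup.subset by blast

lemma finite_level: "finite (level n)"
  using chain unfolding normal_fi_chain_def by auto

lemma level_zero: "level 0 = {carrier G}"
proof -
  have "\<Gamma> 0 = carrier G" using chain unfolding normal_fi_chain_def by auto
  then show ?thesis unfolding RCOSETS_def using coset_join2[OF _ subgroup_self] by auto
qed

lemma level_elem: "c \<in> level n \<Longrightarrow> \<exists>h\<in>carrier G. c = \<Gamma> n #> h"
  unfolding RCOSETS_def by auto

lemma coset_in_level: "h \<in> carrier G \<Longrightarrow> \<Gamma> n #> h \<in> level n"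
  using rcosetsI chain_subset by blast

lemma level_subset_carrier: "c \<in> level n \<Longrightarrow> c \<subseteq> carrier G"
  using level_elem r_coset_subset_G chain_subset by blast

lemma chain_in_level: "\<Gamma> n \<in> level n"
  using coset_in_level[of \<one> n] chain_subset by simp

lemma index_pos: "index n > 0"
  unfolding chain_index_def using finite_level chain_in_level by (auto simp: card_gt_0_iff)

text \<open>Distinct vertices of one level are disjoint, so a vertex has a unique ancestor.\<close>
lemma ancestor_unique:
  assumes "c \<in> level n" "d \<in> level m" "d' \<in> level m" "c \<subseteq> d" "c \<subseteq> d'"
  shows "d = d'"
proof -
  have "c \<noteq> {}" using assms(1) level_elem rcos_self chain_subgroup by blast
  then have "d \<inter> d' \<noteq> {}" using assms(4,5) by blast
  then show ?thesis
    using rcos_disjoint[OF chain_subgroup] assms(2,3) unfolding pairwise_def disjnt_def by blast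
qed

text \<open>Normality: left multiplication maps the coset \<open>\<Gamma>\<^sub>n h\<close> to the coset \<open>\<Gamma>\<^sub>n gh\<close>.\<close>
lemma left_mult_coset:
  assumes g: "g \<in> carrier G" and h: "h \<in> carrier G"
  shows "g <# (\<Gamma> n #> h) = \<Gamma> n #> (g \<otimes> h)"
proof -
  have "g <# (\<Gamma> n #> h) = (g <# \<Gamma> n) #> h" using coset_assoc g h chain_subset by blast
  also have "g <# \<Gamma> n = \<Gamma> n #> g"
    using chain_normal g unfolding normal_def normal_axioms_def by auto
  also have "(\<Gamma> n #> g) #> h = \<Gamma> n #> (g \<otimes> h)" using coset_mult_assoc g h chain_subset by blast
  finally show ?thesis .
qed

lemma ray_level: "x \<in> Bd \<Longrightarrow> x n \<in> level n"
  unfolding tree_boundary_def by auto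

lemma ray_antimono: "x \<in> Bd \<Longrightarrow> m \<le> n \<Longrightarrow> x n \<subseteq> x m"
  by (rule lift_Suc_antimono_le[of x]) (auto simp: tree_boundary_def)

lemma shadow_Int:
  assumes mn: "m \<le> n" and c: "c \<in> level n" and d: "d \<in> level m"
  shows "shadow G \<Gamma> n c \<inter> shadow G \<Gamma> m d = (if c \<subseteq> d then shadow G \<Gamma> n c else {})"
proof (cases "c \<subseteq> d")
  case True
  have "x m = d" if "x \<in> Bd" "x n = c" for x
    using ancestor_unique[OF c d ray_level[OF that(1)] True] ray_antimono[OF that(1) mn] that
    by auto
  then show ?thesis using True unfolding shadow_def by auto
next
  case False
  then show ?thesis using ray_antimono[OF _ mn] unfolding shadow_def by auto
qed

subsection \<open>The boundary measure\<close>

lemma space_M: "space M = Bd"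
  and sets_M: "sets M = sigma_sets Bd (shadows G \<Gamma>)"
  and emeasure_shadow: "c \<in> level n \<Longrightarrow> emeasure M (shadow G \<Gamma> n c) = ennreal (1 / real (index n))"
  using boundary_measure unfolding is_boundary_measure_def by auto

lemma shadows_subset: "shadows G \<Gamma> \<subseteq> Pow Bd"
  unfolding shadows_def shadow_def by auto

lemma shadow_sets: "c \<in> level n \<Longrightarrow> shadow G \<Gamma> n c \<in> sets M"
  unfolding sets_M shadows_def by (rule sigma_sets.Basic) blast

lemma sets_subset_boundary: "A \<in> sets M \<Longrightarrow> A \<subseteq> Bd"
  using sets.sets_into_space space_M by blast

lemma boundary_sets: "Bd \<in> sets M"
  using sets.top space_M by metis

lemma shadow_root: "shadow G \<Gamma> 0 (carrier G) = Bd"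
  unfolding shadow_def using ray_level[of _ 0] level_zero by auto

lemma prob_space_M: "prob_space M"
proof
  have "index 0 = 1" unfolding chain_index_def level_zero by simp
  then have "emeasure M (shadow G \<Gamma> 0 (carrier G)) = 1"
    using emeasure_shadow[of "carrier G" 0] level_zero by simp
  then show "emeasure M (space M) = 1" using shadow_root space_M by simp
qed

sublocale P: prob_space M by (rule prob_space_M)

lemma measure_shadow: "c \<in> level n \<Longrightarrow> measure M (shadow G \<Gamma> n c) = 1 / real (index n)"
  unfolding measure_def by (simp add: emeasure_shadow)

lemma measure_compl: "A \<in> sets M \<Longrightarrow> measure M (Bd - A) = 1 - measure M A"
  using P.prob_compl space_M by simp

definition shadow_system :: "(nat \<Rightarrow> 'a set) set set" where
  "shadow_system = insert {} (shadows G \<Gamma>)"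

lemma shadow_system_Int_stable: "Int_stable shadow_system"
proof (rule Int_stableI)
  fix a b assume a: "a \<in> shadow_system" and b: "b \<in> shadow_system"
  show "a \<inter> b \<in> shadow_system"
  proof (cases "a = {} \<or> b = {}")
    case True then show ?thesis unfolding shadow_system_def by auto
  next
    case False
    then obtain n c m d where ab: "a = shadow G \<Gamma> n c" "c \<in> level n"
      "b = shadow G \<Gamma> m d" "d \<in> level m"
      using a b unfolding shadow_system_def shadows_def by auto
    consider "m \<le> n" | "n \<le> m" by linarith
    then show ?thesis
    proof cases
      case 1 with shadow_Int[OF 1 ab(2,4)] ab show ?thesis
        unfolding shadow_system_def shadows_def by auto
    next
      case 2 with shadow_Int[OF 2 ab(4,2)] ab show ?thesis
        unfolding shadow_system_def shadows_def by (auto simp: Int_commute)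
    qed
  qed
qed

lemma sets_M_shadow_system: "sets M = sigma_sets Bd shadow_system"
proof -
  have "sigma_sets Bd shadow_system = sigma_sets Bd (shadows G \<Gamma>)"
  proof
    show "sigma_sets Bd shadow_system \<subseteq> sigma_sets Bd (shadows G \<Gamma>)"
      unfolding shadow_system_def
      by (rule sigma_sets_mono) (auto intro: sigma_sets.Empty sigma_sets.Basic)
    show "sigma_sets Bd (shadows G \<Gamma>) \<subseteq> sigma_sets Bd shadow_system"
      unfolding shadow_system_def by (rule sigma_sets_mono') auto
  qed
  then show ?thesis using sets_M by simp
qed

subsection \<open>Automorphisms of the coset tree and their lifts to the boundary\<close>

definition tree_automorphism :: "('a set \<Rightarrow> 'a set) \<Rightarrow> ('a set \<Rightarrow> 'a set) \<Rightarrow> bool" where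
  "tree_automorphism \<phi> \<psi> \<longleftrightarrow>
     (\<forall>n. \<forall>c\<in>level n. \<phi> c \<in> level n \<and> \<psi> c \<in> level n \<and> \<psi> (\<phi> c) = c \<and> \<phi> (\<psi> c) = c) \<and>
     (\<forall>c d. c \<subseteq> d \<longrightarrow> \<phi> c \<subseteq> \<phi> d \<and> \<psi> c \<subseteq> \<psi> d)"

lemma tree_automorphismI:
  assumes "\<And>n c. c \<in> level n \<Longrightarrow> \<phi> c \<in> level n" "\<And>n c. c \<in> level n \<Longrightarrow> \<psi> c \<in> level n"
    "\<And>n c. c \<in> level n \<Longrightarrow> \<psi> (\<phi> c) = c" "\<And>n c. c \<in> level n \<Longrightarrow> \<phi> (\<psi> c) = c"
    "\<And>c d. c \<subseteq> d \<Longrightarrow> \<phi> c \<subseteq> \<phi> d" "\<And>c d. c \<subseteq> d \<Longrightarrow> \<psi> c \<subseteq> \<psi> d"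
  shows "tree_automorphism \<phi> \<psi>"
  unfolding tree_automorphism_def using assms by simp

lemma
  assumes "tree_automorphism \<phi> \<psi>" and "c \<in> level n"
  shows automorphism_level: "\<phi> c \<in> level n"
    and automorphism_inverse_level: "\<psi> c \<in> level n"
    and automorphism_inverse_left: "\<psi> (\<phi> c) = c"
    and automorphism_inverse_right: "\<phi> (\<psi> c) = c"
  using assms unfolding tree_automorphism_def by blast+

lemma
  assumes "tree_automorphism \<phi> \<psi>" and "c \<subseteq> d"
  shows automorphism_mono: "\<phi> c \<subseteq> \<phi> d"
    and automorphism_inverse_mono: "\<psi> c \<subseteq> \<psi> d"
proof -
  have "\<forall>c d. c \<subseteq> d \<longrightarrow> \<phi> c \<subseteq> \<phi> d \<and> \<psi> c \<subseteq> \<psi> d"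
    using assms(1) unfolding tree_automorphism_def by (rule conjunct2)
  then show "\<phi> c \<subseteq> \<phi> d" "\<psi> c \<subseteq> \<psi> d" using assms(2) by simp_all
qed

lemma automorphism_inverse:
  assumes "tree_automorphism \<phi> \<psi>"
  shows "tree_automorphism \<psi> \<phi>"
  by (intro tree_automorphismI)
     (simp_all add: automorphism_level[OF assms] automorphism_inverse_level[OF assms]
       automorphism_inverse_left[OF assms] automorphism_inverse_right[OF assms]
       automorphism_mono[OF assms] automorphism_inverse_mono[OF assms])

lemma automorphism_bij_level:
  assumes "tree_automorphism \<phi> \<psi>"
  shows "bij_betw \<phi> (level n) (level n)"
proof (rule bij_betw_byWitness[of _ \<psi>])
  show "\<forall>c\<in>level n. \<psi> (\<phi> c) = c" "\<forall>c\<in>level n. \<phi> (\<psi> c) = c"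
    using automorphism_inverse_left[OF assms] automorphism_inverse_right[OF assms] by blast+
  show "\<phi> ` level n \<subseteq> level n" "\<psi> ` level n \<subseteq> level n"
    using automorphism_level[OF assms] automorphism_inverse_level[OF assms] by blast+
qed

definition lift_ray :: "('a set \<Rightarrow> 'a set) \<Rightarrow> (nat \<Rightarrow> 'a set) \<Rightarrow> (nat \<Rightarrow> 'a set)" where
  "lift_ray \<phi> x = (\<lambda>n. \<phi> (x n))"

lemma lift_ray_boundary:
  assumes "tree_automorphism \<phi> \<psi>" "x \<in> Bd"
  shows "lift_ray \<phi> x \<in> Bd"
  using automorphism_level[OF assms(1)] automorphism_mono[OF assms(1)] assms(2)
  unfolding tree_boundary_def lift_ray_def by simp

lemma lift_ray_inverse:
  assumes "tree_automorphism \<phi> \<psi>" "x \<in> Bd"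
  shows "lift_ray \<psi> (lift_ray \<phi> x) = x"
  using automorphism_inverse_left[OF assms(1) ray_level[OF assms(2)]] unfolding lift_ray_def by simp

lemma lift_ray_vimage_shadow:
  assumes aut: "tree_automorphism \<phi> \<psi>" and c: "c \<in> level n"
  shows "lift_ray \<phi> -` shadow G \<Gamma> n c \<inter> Bd = shadow G \<Gamma> n (\<psi> c)"
proof -
  have "\<phi> (x n) = c \<longleftrightarrow> x n = \<psi> c" if "x \<in> Bd" for x
    using automorphism_inverse_left[OF aut ray_level[OF that]]
      automorphism_inverse_right[OF aut c] by metis
  then show ?thesis using lift_ray_boundary[OF aut] unfolding shadow_def lift_ray_def by auto
qed

lemma lift_ray_measurable:
  assumes aut: "tree_automorphism \<phi> \<psi>"
  shows "lift_ray \<phi> \<in> measurable M M"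
proof (rule measurable_sigma_sets[OF sets_M shadows_subset])
  show "lift_ray \<phi> \<in> space M \<rightarrow> Bd" using lift_ray_boundary[OF aut] space_M by auto
next
  fix y assume "y \<in> shadows G \<Gamma>"
  then obtain n c where y: "y = shadow G \<Gamma> n c" "c \<in> level n" unfolding shadows_def by blast
  then show "lift_ray \<phi> -` y \<inter> space M \<in> sets M"
    using lift_ray_vimage_shadow[OF aut] shadow_sets automorphism_inverse_level[OF aut] space_M
    by simp
qed

text \<open>Tree automorphisms preserve the boundary measure (it suffices to check shadows).\<close>
lemma lift_ray_measure_preserving:
  assumes aut: "tree_automorphism \<phi> \<psi>"
  shows "distr M M (lift_ray \<phi>) = M"
proof (rule measure_eqI_generator_eq[OF shadow_system_Int_stable, of Bd _ _ "\<lambda>_. Bd"])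
  show "shadow_system \<subseteq> Pow Bd" unfolding shadow_system_def using shadows_subset by auto
  show "sets (distr M M (lift_ray \<phi>)) = sigma_sets Bd shadow_system"
    and "sets M = sigma_sets Bd shadow_system" using sets_M_shadow_system by simp_all
  show "range (\<lambda>_. Bd) \<subseteq> shadow_system"
    unfolding shadow_system_def shadows_def using shadow_root[symmetric] level_zero by blast
  show "(\<Union>i. Bd) = Bd" by simp
  show "emeasure (distr M M (lift_ray \<phi>)) Bd \<noteq> \<infinity>"
    using lift_ray_measurable[OF aut] boundary_sets by (simp add: emeasure_distr P.emeasure_finite)
  fix X assume "X \<in> shadow_system"
  then show "emeasure (distr M M (lift_ray \<phi>)) X = emeasure M X"
  proof (cases "X = {}")
    case False
    then obtain n c where X: "X = shadow G \<Gamma> n c" "c \<in> level n"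
      using \<open>X \<in> shadow_system\<close> unfolding shadow_system_def shadows_def by blast
    have "emeasure (distr M M (lift_ray \<phi>)) X = emeasure M (lift_ray \<phi> -` X \<inter> space M)"
      using X shadow_sets lift_ray_measurable[OF aut] by (simp add: emeasure_distr)
    also have "\<dots> = emeasure M (shadow G \<Gamma> n (\<psi> c))"
      using X lift_ray_vimage_shadow[OF aut] space_M by simp
    finally show ?thesis
      using X emeasure_shadow automorphism_inverse_level[OF aut] by simp
  qed simp
qed

lemma lift_ray_image:
  assumes aut: "tree_automorphism \<phi> \<psi>" and A: "A \<subseteq> Bd"
  shows "lift_ray \<phi> ` A = lift_ray \<psi> -` A \<inter> Bd"
proof
  show "lift_ray \<phi> ` A \<subseteq> lift_ray \<psi> -` A \<inter> Bd"
    using A lift_ray_inverse[OF aut] lift_ray_boundary[OF aut] by blast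
  show "lift_ray \<psi> -` A \<inter> Bd \<subseteq> lift_ray \<phi> ` A"
  proof
    fix y assume y: "y \<in> lift_ray \<psi> -` A \<inter> Bd"
    then have "y = lift_ray \<phi> (lift_ray \<psi> y)"
      using lift_ray_inverse[OF automorphism_inverse[OF aut]] by auto
    then show "y \<in> lift_ray \<phi> ` A" using y by blast
  qed
qed

lemma lift_ray_image_sets:
  assumes aut: "tree_automorphism \<phi> \<psi>" and A: "A \<in> sets M"
  shows "lift_ray \<phi> ` A \<in> sets M" and "measure M (lift_ray \<phi> ` A) = measure M A"
proof -
  have inv: "lift_ray \<psi> \<in> measurable M M" "distr M M (lift_ray \<psi>) = M"
    using lift_ray_measurable lift_ray_measure_preserving automorphism_inverse[OF aut] by blast+
  have eq: "lift_ray \<phi> ` A = lift_ray \<psi> -` A \<inter> space M"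
    using lift_ray_image[OF aut sets_subset_boundary[OF A]] space_M by simp
  show "lift_ray \<phi> ` A \<in> sets M" unfolding eq using inv(1) A by (rule measurable_sets)
  have "measure M A = measure (distr M M (lift_ray \<psi>)) A" using inv(2) by simp
  also have "\<dots> = measure M (lift_ray \<psi> -` A \<inter> space M)" using inv(1) A by (rule measure_distr)
  finally show "measure M (lift_ray \<phi> ` A) = measure M A" unfolding eq by (rule sym)
qed

text \<open>Lifts are bijections of the boundary, so images commute with differences.\<close>
lemma lift_ray_image_Diff:
  assumes aut: "tree_automorphism \<phi> \<psi>" and "X \<subseteq> Bd" "Y \<subseteq> Bd"
  shows "lift_ray \<phi> ` (X - Y) = lift_ray \<phi> ` X - lift_ray \<phi> ` Y"
proof (rule inj_on_image_set_diff)
  show "inj_on (lift_ray \<phi>) Bd" by (metis inj_onI lift_ray_inverse[OF aut])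
qed (use assms in auto)

lemma lift_ray_image_boundary:
  assumes aut: "tree_automorphism \<phi> \<psi>"
  shows "lift_ray \<phi> ` Bd = Bd"
  using lift_ray_image[OF aut order.refl] lift_ray_boundary[OF automorphism_inverse[OF aut]]
  by blast

subsection \<open>The action and the commuting left translations\<close>

lemma right_mult_automorphism:
  assumes g: "\<gamma> \<in> carrier G"
  shows "tree_automorphism (\<lambda>c. c #> \<gamma>) (\<lambda>c. c #> inv \<gamma>)"
proof (rule tree_automorphismI)
  fix n c assume c: "c \<in> level n"
  obtain h where h: "h \<in> carrier G" "c = \<Gamma> n #> h" using level_elem[OF c] by blast
  show "c #> \<gamma> \<in> level n" "c #> inv \<gamma> \<in> level n"
    using h g coset_in_level coset_mult_assoc[OF chain_subset] by simp_all
  have cs: "c \<subseteq> carrier G" using level_subset_carrier[OF c] .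
  show "c #> \<gamma> #> inv \<gamma> = c" "c #> inv \<gamma> #> \<gamma> = c"
    using g coset_mult_assoc[OF cs] cs by simp_all
next
  fix c d :: "'a set" assume "c \<subseteq> d"
  then show "c #> \<gamma> \<subseteq> d #> \<gamma>" "c #> inv \<gamma> \<subseteq> d #> inv \<gamma>" unfolding r_coset_def by auto
qed

text \<open>By normality of the \<open>\<Gamma>\<^sub>n\<close>, left multiplication by \<open>g\<close> is a tree automorphism too.\<close>
lemma left_mult_automorphism:
  assumes g: "g \<in> carrier G"
  shows "tree_automorphism (\<lambda>c. g <# c) (\<lambda>c. inv g <# c)"
proof (rule tree_automorphismI)
  fix n c assume c: "c \<in> level n"
  obtain h where h: "h \<in> carrier G" "c = \<Gamma> n #> h" using level_elem[OF c] by blast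
  show "g <# c \<in> level n" "inv g <# c \<in> level n"
    using h g left_mult_coset coset_in_level by simp_all
  have cs: "c \<subseteq> carrier G" using level_subset_carrier[OF c] .
  show "inv g <# (g <# c) = c" "g <# (inv g <# c) = c"
    using g lcos_m_assoc[OF cs] lcos_mult_one[OF cs] by simp_all
next
  fix c d :: "'a set" assume "c \<subseteq> d"
  then show "g <# c \<subseteq> g <# d" "inv g <# c \<subseteq> inv g <# d" unfolding l_coset_def by auto
qed

lemma set_act_lift: "set_act G A \<gamma> = lift_ray (\<lambda>c. c #> \<gamma>) ` A"
  unfolding set_act_def ray_act_def lift_ray_def by simp

lemma
  assumes "\<gamma> \<in> carrier G" "A \<in> sets M"
  shows set_act_sets: "set_act G A \<gamma> \<in> sets M"
    and measure_set_act: "measure M (set_act G A \<gamma>) = measure M A"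
  unfolding set_act_lift
  using lift_ray_image_sets[OF right_mult_automorphism[OF assms(1)] assms(2)] by auto

lemma set_act_boundary: "\<gamma> \<in> carrier G \<Longrightarrow> A \<subseteq> Bd \<Longrightarrow> set_act G A \<gamma> \<subseteq> Bd"
  unfolding set_act_lift using lift_ray_boundary[OF right_mult_automorphism] by blast

lemma set_act_compl:
  assumes "\<gamma> \<in> carrier G" "A \<subseteq> Bd"
  shows "set_act G (Bd - A) \<gamma> = Bd - set_act G A \<gamma>"
  unfolding set_act_lift
  using lift_ray_image_Diff[OF right_mult_automorphism[OF assms(1)] order.refl assms(2)]
    lift_ray_image_boundary[OF right_mult_automorphism[OF assms(1)]] by simp

lemma measure_Diff_set_act_sym:
  assumes "\<gamma> \<in> carrier G" "A \<in> sets M"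
  shows "measure M (A - set_act G A \<gamma>) = measure M (set_act G A \<gamma> - A)"
proof -
  let ?A\<gamma> = "set_act G A \<gamma>"
  have "measure M (A - ?A\<gamma>) = measure M A - measure M (A \<inter> ?A\<gamma>)"
    using P.finite_measure_Diff'[OF assms(2) set_act_sets[OF assms]] .
  also have "\<dots> = measure M ?A\<gamma> - measure M (?A\<gamma> \<inter> A)"
    using measure_set_act[OF assms] by (simp add: Int_commute)
  also have "\<dots> = measure M (?A\<gamma> - A)"
    using P.finite_measure_Diff'[OF set_act_sets[OF assms] assms(2)] by simp
  finally show ?thesis .
qed

lemma set_act_compl_Diff:
  assumes "\<gamma> \<in> carrier G" "A \<in> sets M"
  shows "set_act G (Bd - A) \<gamma> - (Bd - A) = A - set_act G A \<gamma>"
  using set_act_compl[OF assms(1) sets_subset_boundary[OF assms(2)]]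
    sets_subset_boundary[OF assms(2)] by blast

definition left_translate :: "'a \<Rightarrow> (nat \<Rightarrow> 'a set) set \<Rightarrow> (nat \<Rightarrow> 'a set) set" where
  "left_translate g A = lift_ray (\<lambda>c. g <# c) ` A"

lemma
  assumes "g \<in> carrier G" "A \<in> sets M"
  shows left_translate_sets: "left_translate g A \<in> sets M"
    and measure_left_translate: "measure M (left_translate g A) = measure M A"
  unfolding left_translate_def
  using lift_ray_image_sets[OF left_mult_automorphism[OF assms(1)] assms(2)] by auto

lemma left_translate_Diff:
  assumes "g \<in> carrier G" "X \<subseteq> Bd" "Y \<subseteq> Bd"
  shows "left_translate g (X - Y) = left_translate g X - left_translate g Y"
  unfolding left_translate_def
  using lift_ray_image_Diff[OF left_mult_automorphism[OF assms(1)] assms(2,3)] .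

lemma set_act_left_translate:
  assumes g: "g \<in> carrier G" and \<gamma>: "\<gamma> \<in> carrier G" and A: "A \<subseteq> Bd"
  shows "set_act G (left_translate g A) \<gamma> = left_translate g (set_act G A \<gamma>)"
proof -
  have "g <# (x n #> \<gamma>) = (g <# x n) #> \<gamma>" if "x \<in> A" for x n
    using coset_assoc[OF g \<gamma> level_subset_carrier[OF ray_level]] A that by blast
  then have "lift_ray (\<lambda>c. c #> \<gamma>) (lift_ray (\<lambda>c. g <# c) x) =
      lift_ray (\<lambda>c. g <# c) (lift_ray (\<lambda>c. c #> \<gamma>) x)" if "x \<in> A" for x
    using that unfolding lift_ray_def by simp
  then show ?thesis
    unfolding set_act_lift left_translate_def image_image by (rule image_cong[OF refl])
qed


subsection \<open>Cylinders and approximation of measurable sets\<close>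

definition cylinder :: "nat \<Rightarrow> 'a set set \<Rightarrow> (nat \<Rightarrow> 'a set) set" where
  "cylinder L S = {x \<in> Bd. x L \<in> S}"

lemma cylinder_UN: "cylinder L S = (\<Union>c\<in>S. shadow G \<Gamma> L c)"
  unfolding cylinder_def shadow_def by auto

lemma cylinder_sets:
  assumes "S \<subseteq> level L"
  shows "cylinder L S \<in> sets M"
proof -
  have "finite S" using finite_level assms finite_subset by blast
  then show ?thesis unfolding cylinder_UN using assms shadow_sets by (intro sets.finite_UN) auto
qed

lemma measure_cylinder:
  assumes "S \<subseteq> level L"
  shows "measure M (cylinder L S) = card S / index L"
proof -
  have "finite S" using finite_level assms finite_subset by blast
  then have "measure M (cylinder L S) = (\<Sum>c\<in>S. measure M (shadow G \<Gamma> L c))"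
    unfolding cylinder_UN using assms shadow_sets
    by (intro P.finite_measure_finite_Union) (auto simp: disjoint_family_on_def shadow_def)
  also have "\<dots> = (\<Sum>c\<in>S. 1 / real (index L))"
    using assms measure_shadow by (intro sum.cong) auto
  finally show ?thesis by simp
qed

lemma cylinder_compl: "S \<subseteq> level L \<Longrightarrow> Bd - cylinder L S = cylinder L (level L - S)"
  unfolding cylinder_def using ray_level by auto

lemma cylinder_Un: "cylinder L S \<union> cylinder L T = cylinder L (S \<union> T)"
  unfolding cylinder_def by auto

lemma cylinder_Int: "cylinder L S \<inter> cylinder L T = cylinder L (S \<inter> T)"
  unfolding cylinder_def by auto

lemma cylinder_refine:
  assumes "L \<le> L'" "S \<subseteq> level L"
  shows "cylinder L S = cylinder L' {d \<in> level L'. \<exists>c\<in>S. d \<subseteq> c}"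
proof -
  have "x L \<in> S \<longleftrightarrow> (\<exists>c\<in>S. x L' \<subseteq> c)" if x: "x \<in> Bd" for x
  proof
    assume "x L \<in> S" then show "\<exists>c\<in>S. x L' \<subseteq> c" using ray_antimono[OF x assms(1)] by blast
  next
    assume "\<exists>c\<in>S. x L' \<subseteq> c"
    then obtain c where "c \<in> S" "x L' \<subseteq> c" by blast
    moreover have "x L = c"
      using ancestor_unique[OF ray_level[OF x] ray_level[OF x] _ ray_antimono[OF x assms(1)]]
        calculation assms(2) by blast
    ultimately show "x L \<in> S" by simp
  qed
  then show ?thesis unfolding cylinder_def using ray_level by blast
qed

lemma left_translate_cylinder:
  assumes g: "g \<in> carrier G" and S: "S \<subseteq> level L"
  shows "left_translate g (cylinder L S) = cylinder L ((\<lambda>c. g <# c) ` S)"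
proof -
  have aut: "tree_automorphism (\<lambda>c. g <# c) (\<lambda>c. inv g <# c)"
    using left_mult_automorphism[OF g] .
  have "inv g <# x L \<in> S \<longleftrightarrow> x L \<in> (\<lambda>c. g <# c) ` S" if x: "x \<in> Bd" for x
    using automorphism_inverse_right[OF aut ray_level[OF x]]
      automorphism_inverse_left[OF aut] S by force
  moreover have "lift_ray (\<lambda>c. inv g <# c) x \<in> Bd" if "x \<in> Bd" for x
    using lift_ray_boundary[OF automorphism_inverse[OF aut] that] .
  moreover have "left_translate g (cylinder L S) = lift_ray (\<lambda>c. inv g <# c) -` cylinder L S \<inter> Bd"
    unfolding left_translate_def by (rule lift_ray_image[OF aut]) (auto simp: cylinder_def)
  ultimately show ?thesis unfolding cylinder_def by (auto simp: lift_ray_def)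
qed

definition approximable :: "(nat \<Rightarrow> 'a set) set \<Rightarrow> bool" where
  "approximable A \<longleftrightarrow>
     (\<forall>e>0. \<exists>L0. \<forall>L\<ge>L0. \<exists>S\<subseteq>level L. measure M (sym_diff A (cylinder L S)) < e)"

lemma approximable_cylinder:
  assumes "S \<subseteq> level L"
  shows "approximable (cylinder L S)"
proof -
  have "\<exists>S'\<subseteq>level L'. measure M (sym_diff (cylinder L S) (cylinder L' S')) < e"
    if "e > 0" "L \<le> L'" for e :: real and L'
  proof (intro exI conjI)
    show "{d \<in> level L'. \<exists>c\<in>S. d \<subseteq> c} \<subseteq> level L'" by blast
    show "measure M (sym_diff (cylinder L S) (cylinder L' {d \<in> level L'. \<exists>c\<in>S. d \<subseteq> c})) < e"
      using cylinder_refine[OF that(2) assms] that(1) by simp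
  qed
  then show ?thesis unfolding approximable_def by blast
qed

lemma approximable_compl:
  assumes "approximable A" "A \<subseteq> Bd"
  shows "approximable (Bd - A)"
  unfolding approximable_def
proof (intro allI impI)
  fix e :: real assume "e > 0"
  then obtain L0 where L0: "\<forall>L\<ge>L0. \<exists>S\<subseteq>level L. measure M (sym_diff A (cylinder L S)) < e"
    using assms(1) unfolding approximable_def by blast
  have "\<exists>S\<subseteq>level L. measure M (sym_diff (Bd - A) (cylinder L S)) < e" if deep: "L0 \<le> L" for L
  proof -
    obtain S where S: "S \<subseteq> level L" "measure M (sym_diff A (cylinder L S)) < e"
      using L0 deep by blast
    have "cylinder L S \<subseteq> Bd" unfolding cylinder_def by blast
    then have "sym_diff (Bd - A) (Bd - cylinder L S) = sym_diff A (cylinder L S)"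
      using assms(2) by blast
    then have "sym_diff (Bd - A) (cylinder L (level L - S)) = sym_diff A (cylinder L S)"
      unfolding cylinder_compl[OF S(1)] .
    then show ?thesis using S by (intro exI[of _ "level L - S"]) auto
  qed
  then show "\<exists>L0. \<forall>L\<ge>L0. \<exists>S\<subseteq>level L. measure M (sym_diff (Bd - A) (cylinder L S)) < e"
    by blast
qed

lemma approximable_Un:
  assumes A: "approximable A" "A \<in> sets M" and B: "approximable B" "B \<in> sets M"
  shows "approximable (A \<union> B)"
  unfolding approximable_def
proof (intro allI impI)
  fix e :: real assume "e > 0"
  then have e2: "e/2 > 0" by simp
  obtain L1 where L1: "\<forall>L\<ge>L1. \<exists>S\<subseteq>level L. measure M (sym_diff A (cylinder L S)) < e/2"
    using A(1) e2 unfolding approximable_def by blast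
  obtain L2 where L2: "\<forall>L\<ge>L2. \<exists>S\<subseteq>level L. measure M (sym_diff B (cylinder L S)) < e/2"
    using B(1) e2 unfolding approximable_def by blast
  have "\<exists>S\<subseteq>level L. measure M (sym_diff (A \<union> B) (cylinder L S)) < e" if "max L1 L2 \<le> L" for L
  proof -
    have "L1 \<le> L" "L2 \<le> L" using that by simp_all
    then obtain S T where S: "S \<subseteq> level L" "measure M (sym_diff A (cylinder L S)) < e/2"
      and T: "T \<subseteq> level L" "measure M (sym_diff B (cylinder L T)) < e/2"
      using L1 L2 by blast
    have sets: "sym_diff A (cylinder L S) \<in> sets M" "sym_diff B (cylinder L T) \<in> sets M"
      using A(2) B(2) cylinder_sets[OF S(1)] cylinder_sets[OF T(1)] by auto
    have "sym_diff (A \<union> B) (cylinder L (S \<union> T))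
        \<subseteq> sym_diff A (cylinder L S) \<union> sym_diff B (cylinder L T)"
      unfolding cylinder_Un[symmetric] by blast
    then have "measure M (sym_diff (A \<union> B) (cylinder L (S \<union> T)))
        \<le> measure M (sym_diff A (cylinder L S) \<union> sym_diff B (cylinder L T))"
      using sets by (intro P.finite_measure_mono) auto
    also have "\<dots> \<le> measure M (sym_diff A (cylinder L S)) + measure M (sym_diff B (cylinder L T))"
      using sets by (rule measure_Un_le)
    finally show ?thesis using S T by (intro exI[of _ "S \<union> T"]) auto
  qed
  then show "\<exists>L0. \<forall>L\<ge>L0. \<exists>S\<subseteq>level L. measure M (sym_diff (A \<union> B) (cylinder L S)) < e"
    by blast
qed

lemma approximable_finite_UN:
  fixes a :: "nat \<Rightarrow> (nat \<Rightarrow> 'a set) set"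
  assumes "\<And>i. approximable (a i)" "\<And>i. a i \<in> sets M"
  shows "approximable (\<Union>i<k. a i)"
proof (induction k)
  case 0
  have "{} = cylinder 0 {}" unfolding cylinder_def by simp
  then show ?case using approximable_cylinder[of "{}" 0] by simp
next
  case (Suc k)
  have "(\<Union>i<Suc k. a i) = (\<Union>i<k. a i) \<union> a k" by (auto simp: lessThan_Suc)
  then show ?case using Suc assms by (simp add: approximable_Un sets.finite_UN)
qed

text \<open>Countable unions: a long enough finite partial union is already close in measure.\<close>
lemma approximable_UN:
  fixes a :: "nat \<Rightarrow> (nat \<Rightarrow> 'a set) set"
  assumes approx: "\<And>i. approximable (a i)" and sets: "\<And>i. a i \<in> sets M"
  shows "approximable (\<Union>i. a i)"
  unfolding approximable_def
proof (intro allI impI)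
  fix e :: real assume "e > 0"
  then have e2: "e/2 > 0" by simp
  define U where "U = (\<Union>i. a i)"
  define P where "P k = (\<Union>i<k. a i)" for k
  have U: "U \<in> sets M" and P: "P k \<in> sets M" for k
    unfolding U_def P_def using sets by auto
  have "(\<lambda>k. measure M (P k)) \<longlonglongrightarrow> measure M (\<Union>k. P k)"
  proof (rule P.finite_Lim_measure_incseq)
    show "range P \<subseteq> sets M" using P by blast
    show "incseq P" unfolding incseq_def P_def by (intro allI impI UN_mono) auto
  qed
  moreover have "(\<Union>k. P k) = U" unfolding P_def U_def by auto
  ultimately have "(\<lambda>k. measure M (P k)) \<longlonglongrightarrow> measure M U" by simp
  from LIMSEQ_D[OF this e2] obtain m where "\<forall>k\<ge>m. norm (measure M (P k) - measure M U) < e/2" ..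
  then have "\<bar>measure M (P m) - measure M U\<bar> < e/2" by simp
  then have m: "measure M U - measure M (P m) < e/2" by linarith
  have PU: "P m \<subseteq> U" unfolding P_def U_def by auto
  have "approximable (P m)" unfolding P_def using approx sets by (rule approximable_finite_UN)
  then obtain L0 where L0: "\<forall>L\<ge>L0. \<exists>S\<subseteq>level L. measure M (sym_diff (P m) (cylinder L S)) < e/2"
    using e2 unfolding approximable_def by blast
  have "\<exists>S\<subseteq>level L. measure M (sym_diff U (cylinder L S)) < e" if deep: "L0 \<le> L" for L
  proof -
    obtain S where S: "S \<subseteq> level L" "measure M (sym_diff (P m) (cylinder L S)) < e/2"
      using L0 deep by blast
    have D: "sym_diff (P m) (cylinder L S) \<in> sets M" using P cylinder_sets[OF S(1)] by auto
    have "sym_diff U (cylinder L S) \<subseteq> (U - P m) \<union> sym_diff (P m) (cylinder L S)"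
      using PU by blast
    then have "measure M (sym_diff U (cylinder L S))
        \<le> measure M ((U - P m) \<union> sym_diff (P m) (cylinder L S))"
      using U P D by (intro P.finite_measure_mono) auto
    also have "\<dots> \<le> measure M (U - P m) + measure M (sym_diff (P m) (cylinder L S))"
      using U P D by (intro measure_Un_le) auto
    also have "measure M (U - P m) = measure M U - measure M (P m)"
      using P.finite_measure_Diff[OF U P PU] .
    finally show ?thesis using m S by (intro exI[of _ S]) auto
  qed
  then show "\<exists>L0. \<forall>L\<ge>L0. \<exists>S\<subseteq>level L. measure M (sym_diff (\<Union>i. a i) (cylinder L S)) < e"
    unfolding U_def by blast
qed

theorem approximable_sets:
  assumes "A \<in> sets M"
  shows "approximable A"
proof -
  have "A \<in> sigma_sets Bd (shadows G \<Gamma>)" using assms sets_M by simp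
  then show ?thesis
  proof (induction rule: sigma_sets.induct)
    case (Basic a)
    then obtain n c where "a = shadow G \<Gamma> n c" "c \<in> level n" unfolding shadows_def by blast
    moreover have "shadow G \<Gamma> n c = cylinder n {c}" unfolding cylinder_def shadow_def by auto
    ultimately show ?case using approximable_cylinder[of "{c}" n] by simp
  next
    case Empty
    have "{} = cylinder 0 {}" unfolding cylinder_def by simp
    then show ?case using approximable_cylinder[of "{}" 0] by simp
  next
    case (Compl a)
    then show ?case using approximable_compl sigma_sets_into_sp[OF shadows_subset] by blast
  next
    case (Union a)
    then have "a i \<in> sets M" for i using sets_M by simp
    then show ?case using approximable_UN Union.IH by blast
  qed
qed

subsection \<open>Mixing: some left translate of \<open>A\<close> is almost independent of \<open>C\<close>\<close>

definition representative :: "nat \<Rightarrow> 'a set \<Rightarrow> 'a" where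
  "representative L r = (SOME h. h \<in> carrier G \<and> r = \<Gamma> L #> h)"

lemma
  assumes "r \<in> level L"
  shows representative_carrier: "representative L r \<in> carrier G"
    and representative_coset: "r = \<Gamma> L #> representative L r"
proof -
  have "\<exists>h. h \<in> carrier G \<and> r = \<Gamma> L #> h" using level_elem[OF assms] by blast
  then have "representative L r \<in> carrier G \<and> r = \<Gamma> L #> representative L r"
    unfolding representative_def by (rule someI_ex)
  then show "representative L r \<in> carrier G" "r = \<Gamma> L #> representative L r" by simp_all
qed

lemma representative_left_mult:
  assumes r: "r \<in> level L" and h: "h \<in> carrier G"
  shows "representative L r <# (\<Gamma> L #> h) = r #> h"
proof -
  have "representative L r <# (\<Gamma> L #> h) = \<Gamma> L #> (representative L r \<otimes> h)"
    by (rule left_mult_coset[OF representative_carrier[OF r] h])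
  also have "\<dots> = (\<Gamma> L #> representative L r) #> h"
    by (rule coset_mult_assoc[OF chain_subset representative_carrier[OF r] h, symmetric])
  also have "\<Gamma> L #> representative L r = r"
    by (rule representative_coset[OF r, symmetric])
  finally show ?thesis .
qed

lemma card_translates_into:
  assumes c: "c \<in> level L" and T: "T \<subseteq> level L"
  shows "card (level L \<inter> {r. representative L r <# c \<in> T}) = card T"
proof -
  obtain h where h: "h \<in> carrier G" "c = \<Gamma> L #> h" using level_elem[OF c] by blast
  have bij: "bij_betw (\<lambda>r. r #> h) (level L) (level L)"
    using automorphism_bij_level[OF right_mult_automorphism[OF h(1)]] .
  have "(\<lambda>r. r #> h) ` (level L \<inter> {r. r #> h \<in> T}) = T"
  proof
    show "T \<subseteq> (\<lambda>r. r #> h) ` (level L \<inter> {r. r #> h \<in> T})"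
    proof
      fix t assume t: "t \<in> T"
      then obtain r where "r \<in> level L" "t = r #> h"
        using T bij_betw_imp_surj_on[OF bij] by blast
      then show "t \<in> (\<lambda>r. r #> h) ` (level L \<inter> {r. r #> h \<in> T})" using t by blast
    qed
  qed blast
  then have "bij_betw (\<lambda>r. r #> h) (level L \<inter> {r. r #> h \<in> T}) T"
    by (rule bij_betw_subset[OF bij, rotated]) blast
  then have "card (level L \<inter> {r. r #> h \<in> T}) = card T" by (rule bij_betw_same_card)
  moreover have "representative L r <# c = r #> h" if "r \<in> level L" for r
    using representative_left_mult[OF that h(1)] h(2) by simp
  then have "level L \<inter> {r. representative L r <# c \<in> T} = level L \<inter> {r. r #> h \<in> T}"
    by auto
  ultimately show ?thesis by simp
qed

text \<open>Double counting: summed over \<open>r \<in> \<Gamma>/\<Gamma>\<^sub>L\<close>, the overlaps \<open>|rS \<inter> T|\<close> total \<open>|S| |T|\<close>.\<close>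
lemma sum_card_translates:
  assumes S: "S \<subseteq> level L" and T: "T \<subseteq> level L"
  shows "(\<Sum>r\<in>level L. card ((\<lambda>c. representative L r <# c) ` S \<inter> T)) = card S * card T"
proof -
  have fS: "finite S" using finite_level S finite_subset by blast
  have overlap: "card ((\<lambda>c. representative L r <# c) ` S \<inter> T)
      = card (S \<inter> {c. representative L r <# c \<in> T})" if r: "r \<in> level L" for r
  proof -
    have "inj_on (\<lambda>c. representative L r <# c) (level L)"
      using automorphism_bij_level[OF left_mult_automorphism[OF representative_carrier[OF r]]]
      by (rule bij_betw_imp_inj_on)
    then have "inj_on (\<lambda>c. representative L r <# c) (S \<inter> {c. representative L r <# c \<in> T})"
      by (rule inj_on_subset) (use S in auto)
    moreover have "(\<lambda>c. representative L r <# c) ` S \<inter> T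
        = (\<lambda>c. representative L r <# c) ` (S \<inter> {c. representative L r <# c \<in> T})" by blast
    ultimately show ?thesis by (simp add: card_image)
  qed
  have "(\<Sum>r\<in>level L. card ((\<lambda>c. representative L r <# c) ` S \<inter> T))
      = (\<Sum>r\<in>level L. \<Sum>c\<in>S. of_bool (representative L r <# c \<in> T))"
    using overlap fS by simp
  also have "\<dots> = (\<Sum>c\<in>S. \<Sum>r\<in>level L. of_bool (representative L r <# c \<in> T))"
    by (rule sum.swap)
  also have "\<dots> = (\<Sum>c\<in>S. card T)"
    using card_translates_into S T finite_level by (intro sum.cong) auto
  finally show ?thesis by simp
qed

text \<open>Mixing for cylinders, by averaging over the finite quotient \<open>\<Gamma>/\<Gamma>\<^sub>L\<close>.\<close>
lemma mixing_cylinders: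
  assumes S: "S \<subseteq> level L" and T: "T \<subseteq> level L"
  shows "\<exists>g\<in>carrier G. measure M (left_translate g (cylinder L S) \<inter> cylinder L T)
           \<le> measure M (cylinder L S) * measure M (cylinder L T)"
proof -
  define overlap where "overlap r = card ((\<lambda>c. representative L r <# c) ` S \<inter> T)" for r
  have "\<exists>r\<in>level L. overlap r * card (level L) \<le> sum overlap (level L)"
    using finite_level chain_in_level by (intro exists_le_average) auto
  then obtain r where r: "r \<in> level L" and avg: "overlap r * index L \<le> card S * card T"
    unfolding overlap_def sum_card_translates[OF S T] chain_index_def by blast
  define g where "g = representative L r"
  have g: "g \<in> carrier G" unfolding g_def using representative_carrier[OF r] .
  have gS: "(\<lambda>c. g <# c) ` S \<inter> T \<subseteq> level L" using T by blast
  have "measure M (left_translate g (cylinder L S) \<inter> cylinder L T)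
      = card ((\<lambda>c. g <# c) ` S \<inter> T) / index L"
    using left_translate_cylinder[OF g S] cylinder_Int measure_cylinder[OF gS] by simp
  also have "\<dots> \<le> (card S / index L) * (card T / index L)"
  proof -
    have "real (card ((\<lambda>c. g <# c) ` S \<inter> T)) * real (index L) \<le> real (card S) * real (card T)"
      using avg unfolding g_def overlap_def by (metis of_nat_le_iff of_nat_mult)
    then show ?thesis using index_pos[of L] by (simp add: field_simps)
  qed
  also have "\<dots> = measure M (cylinder L S) * measure M (cylinder L T)"
    using measure_cylinder[OF S] measure_cylinder[OF T] by simp
  finally show ?thesis using g by blast
qed

lemma measure_Diff_le_sym_diff:
  "A \<in> sets M \<Longrightarrow> B \<in> sets M \<Longrightarrow> measure M (A - B) \<le> measure M (sym_diff A B)"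
  by (intro P.finite_measure_mono) auto

lemma measure_le_sym_diff:
  assumes "A \<in> sets M" "B \<in> sets M"
  shows "measure M B \<le> measure M A + measure M (sym_diff A B)"
proof -
  have "measure M B \<le> measure M (A \<union> (B - A))" using assms by (intro P.finite_measure_mono) auto
  also have "\<dots> \<le> measure M A + measure M (B - A)" using assms by (intro measure_Un_le) auto
  also have "measure M (B - A) \<le> measure M (sym_diff A B)"
    using assms by (intro P.finite_measure_mono) auto
  finally show ?thesis by simp
qed

lemma approximation_common_level:
  assumes A: "A \<in> sets M" and C: "C \<in> sets M" and d: "d > 0"
  obtains L S T where "S \<subseteq> level L" "measure M (sym_diff A (cylinder L S)) < d"
    and "T \<subseteq> level L" "measure M (sym_diff C (cylinder L T)) < d"
proof -
  obtain L1 where L1: "\<forall>L\<ge>L1. \<exists>S\<subseteq>level L. measure M (sym_diff A (cylinder L S)) < d"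
    using approximable_sets[OF A] d unfolding approximable_def by blast
  obtain L2 where L2: "\<forall>L\<ge>L2. \<exists>T\<subseteq>level L. measure M (sym_diff C (cylinder L T)) < d"
    using approximable_sets[OF C] d unfolding approximable_def by blast
  have "L1 \<le> max L1 L2" "L2 \<le> max L1 L2" by simp_all
  then show thesis using L1 L2 that by blast
qed

text \<open>
  The mixing lemma: approximate \<open>A\<close> and \<open>C\<close> by cylinders \<open>U\<close> and \<open>V\<close> at a common
  level, take \<open>g\<close> from the cylinder case, and account for the errors.
\<close>
theorem mixing:
  assumes A: "A \<in> sets M" and C: "C \<in> sets M" and e: "e > 0"
  shows "\<exists>g\<in>carrier G. measure M (left_translate g A \<inter> C) \<le> measure M A * measure M C + e"
proof -
  define d where "d = e / 4"
  have d: "d > 0" unfolding d_def using e by simp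
  obtain L S T where S: "S \<subseteq> level L" "measure M (sym_diff A (cylinder L S)) < d"
    and T: "T \<subseteq> level L" "measure M (sym_diff C (cylinder L T)) < d"
    using approximation_common_level[OF A C d] .
  define U where "U = cylinder L S"
  define V where "V = cylinder L T"
  have U: "U \<in> sets M" and V: "V \<in> sets M" unfolding U_def V_def using S T cylinder_sets by auto
  obtain g where g: "g \<in> carrier G"
    and mix_UV: "measure M (left_translate g U \<inter> V) \<le> measure M U * measure M V"
    using mixing_cylinders[OF S(1) T(1)] unfolding U_def V_def by blast
  have err_A: "measure M (A - U) < d" and err_C: "measure M (C - V) < d"
    using measure_Diff_le_sym_diff[OF A U] measure_Diff_le_sym_diff[OF C V] S(2) T(2)
    unfolding U_def V_def by auto
  have product: "measure M U * measure M V \<le> measure M A * measure M C + 2 * d"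
  proof (rule product_perturbation)
    show "measure M U \<le> measure M A + d" "measure M V \<le> measure M C + d"
      using measure_le_sym_diff[OF A U] measure_le_sym_diff[OF C V] S(2) T(2)
      unfolding U_def V_def by auto
  qed (use d in auto)
  let ?gU = "left_translate g U" and ?gAU = "left_translate g (A - U)"
  have D: "A - U \<in> sets M" "?gAU \<in> sets M" "?gU \<inter> V \<in> sets M"
    using A U V left_translate_sets[OF g] by auto
  have "left_translate g A \<inter> C \<subseteq> (?gU \<inter> V \<union> ?gAU) \<union> (C - V)"
    unfolding left_translate_def by blast
  then have "measure M (left_translate g A \<inter> C) \<le> measure M (?gU \<inter> V \<union> ?gAU \<union> (C - V))"
    using D C V by (intro P.finite_measure_mono) auto
  also have "\<dots> \<le> measure M (?gU \<inter> V) + measure M ?gAU + measure M (C - V)"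
    using D C V measure_Un_le by (smt (verit) sets.Diff sets.Un)
  also have "measure M ?gAU = measure M (A - U)"
    using measure_left_translate[OF g D(1)] .
  finally show ?thesis
    using g mix_UV err_A err_C product unfolding d_def by (intro bexI[of _ g]) auto
qed

subsection \<open>Balanced almost invariant sets from small almost invariant sets\<close>

definition translates_union :: "(nat \<Rightarrow> 'a set) set \<Rightarrow> 'a list \<Rightarrow> (nat \<Rightarrow> 'a set) set" where
  "translates_union A gs = (\<Union>g\<in>set gs. left_translate g A)"

lemma translates_union_sets:
  "A \<in> sets M \<Longrightarrow> set gs \<subseteq> carrier G \<Longrightarrow> translates_union A gs \<in> sets M"
  unfolding translates_union_def using left_translate_sets by (intro sets.finite_UN) auto

text \<open>Since left translations commute with the action, a union of \<open>k\<close> translates of \<open>A\<close>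
  loses at most \<open>k\<close> times as much measure under \<open>\<gamma>\<close> as \<open>A\<close> does.\<close>
lemma translates_union_boundary:
  assumes A: "A \<in> sets M" and gs: "set gs \<subseteq> carrier G" and \<gamma>: "\<gamma> \<in> carrier G"
  shows "measure M (translates_union A gs - set_act G (translates_union A gs) \<gamma>)
           \<le> length gs * measure M (A - set_act G A \<gamma>)"
proof -
  let ?B = "translates_union A gs" and ?D = "A - set_act G A \<gamma>"
  have AB: "A \<subseteq> Bd" using sets_subset_boundary[OF A] .
  have D: "?D \<in> sets M" using A set_act_sets[OF \<gamma> A] by auto
  have "set_act G ?B \<gamma> = (\<Union>g\<in>set gs. set_act G (left_translate g A) \<gamma>)"
    unfolding translates_union_def set_act_def by auto
  also have "\<dots> = (\<Union>g\<in>set gs. left_translate g (set_act G A \<gamma>))"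
    using set_act_left_translate[OF _ \<gamma> AB] gs by auto
  finally have "?B - set_act G ?B \<gamma>
      \<subseteq> (\<Union>g\<in>set gs. left_translate g A - left_translate g (set_act G A \<gamma>))"
    unfolding translates_union_def by blast
  also have "\<dots> = (\<Union>g\<in>set gs. left_translate g ?D)"
    using left_translate_Diff[OF _ AB set_act_boundary[OF \<gamma> AB]] gs by auto
  finally have sub: "?B - set_act G ?B \<gamma> \<subseteq> (\<Union>g\<in>set gs. left_translate g ?D)" .
  have sets: "(\<lambda>g. left_translate g ?D) ` set gs \<subseteq> sets M"
    using left_translate_sets[OF _ D] gs by auto
  have "measure M (?B - set_act G ?B \<gamma>) \<le> measure M (\<Union>g\<in>set gs. left_translate g ?D)"
    using sub sets by (intro P.finite_measure_mono) auto
  also have "\<dots> \<le> (\<Sum>g\<in>set gs. measure M (left_translate g ?D))"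
    using sets by (intro P.finite_measure_subadditive_finite) auto
  also have "\<dots> = card (set gs) * measure M ?D"
    using measure_left_translate[OF _ D] gs by (simp add: subset_iff)
  also have "\<dots> \<le> length gs * measure M ?D"
    by (intro mult_right_mono) (auto simp: card_length)
  finally show ?thesis .
qed

text \<open>
  Greedy step: if \<open>\<mu>(B) < 1/4\<close>, adding a translate \<open>gA\<close> almost independent of \<open>B\<close>
  (mixing lemma) increases the measure by at least \<open>\<mu>(A)/2\<close> and at most \<open>\<mu>(A)\<close>.
\<close>
lemma greedy_step:
  assumes A: "A \<in> sets M" "0 < measure M A" and B: "B \<in> sets M" "measure M B < 1/4"
  obtains g where "g \<in> carrier G"
    "measure M B + measure M A / 2 \<le> measure M (B \<union> left_translate g A)"
    "measure M (B \<union> left_translate g A) \<le> measure M B + measure M A"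
proof -
  let ?a = "measure M A"
  obtain g where g: "g \<in> carrier G"
    and mix: "measure M (left_translate g A \<inter> B) \<le> ?a * measure M B + ?a / 4"
    using mixing[OF A(1) B(1), of "?a / 4"] A(2) by auto
  have gA: "left_translate g A \<in> sets M" "measure M (left_translate g A) = ?a"
    using left_translate_sets[OF g A(1)] measure_left_translate[OF g A(1)] by auto
  have "?a * measure M B \<le> ?a * (1/4)" using A(2) B(2) by (intro mult_left_mono) auto
  then have overlap: "measure M (left_translate g A \<inter> B) \<le> ?a / 2" using mix by simp
  have "measure M (B \<union> left_translate g A)
      = measure M B + (?a - measure M (left_translate g A \<inter> B))"
    using P.finite_measure_Union'[OF B(1) gA(1)] P.finite_measure_Diff'[OF gA(1) B(1)] gA(2) by simp
  then show thesis
    using that[OF g] overlap measure_nonneg[of M "left_translate g A \<inter> B"] by simp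
qed

text \<open>
  Iterating the greedy step \<open>k\<close> times gives a union of at most \<open>k\<close> translates of measure at
  least \<open>min(k\<mu>(A)/2, 1/4)\<close>; the last step overshoots \<open>1/4\<close> by at most \<open>\<mu>(A)\<close>.
\<close>
lemma greedy_translates_union:
  assumes A: "A \<in> sets M" and a: "0 < measure M A"
  shows "\<exists>gs. length gs \<le> k \<and> set gs \<subseteq> carrier G \<and>
     min (k * measure M A / 2) (1/4) \<le> measure M (translates_union A gs) \<and>
     measure M (translates_union A gs) \<le> 1/4 + measure M A"
proof (induction k)
  case 0
  have "translates_union A [] = {}" unfolding translates_union_def by simp
  then show ?case using a by (intro exI[of _ "[]"]) auto
next
  case (Suc k)
  let ?a = "measure M A"
  from Suc obtain gs where gs: "length gs \<le> k" "set gs \<subseteq> carrier G"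
    "min (k * ?a / 2) (1/4) \<le> measure M (translates_union A gs)"
    "measure M (translates_union A gs) \<le> 1/4 + ?a" by blast
  let ?B = "translates_union A gs"
  show ?case
  proof (cases "measure M ?B \<ge> 1/4")
    case True
    then show ?thesis using gs by (intro exI[of _ gs]) auto
  next
    case False
    then have kB: "k * ?a / 2 \<le> measure M ?B" using gs(3) by (simp add: min_def split: if_splits)
    obtain g where g: "g \<in> carrier G"
      and lower: "measure M ?B + ?a / 2 \<le> measure M (?B \<union> left_translate g A)"
      and upper: "measure M (?B \<union> left_translate g A) \<le> measure M ?B + ?a"
      using greedy_step[OF A a translates_union_sets[OF A gs(2)]] False by auto
    have union: "translates_union A (g # gs) = ?B \<union> left_translate g A"
      unfolding translates_union_def by auto
    have "min (Suc k * ?a / 2) (1/4) \<le> measure M (translates_union A (g # gs))"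
      using lower kB unfolding union by (simp add: field_simps min_le_iff_disj)
    moreover have "measure M (translates_union A (g # gs)) \<le> 1/4 + ?a"
      using upper False unfolding union by simp
    moreover have "length (g # gs) \<le> Suc k" "set (g # gs) \<subseteq> carrier G" using gs(1,2) g by auto
    ultimately show ?thesis by blast
  qed
qed

text \<open>
  From a set of small measure with small relative boundary, about \<open>1/\<mu>(A)\<close> translates
  produce a set of measure in \<open>[1/4, 3/4]\<close> whose boundary is controlled by that ratio.
\<close>
theorem balanced_almost_invariant_set:
  assumes A: "A \<in> sets M" and a: "0 < measure M A" "measure M A \<le> 1/2"
  shows "\<exists>B\<in>sets M. 1/4 \<le> measure M B \<and> measure M B \<le> 3/4 \<and>
     (\<forall>\<gamma>\<in>carrier G. measure M (B - set_act G B \<gamma>) \<le> measure M (set_act G A \<gamma> - A) / measure M A)"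
proof -
  let ?a = "measure M A"
  define k where "k = nat \<lceil>1 / (2 * ?a)\<rceil>"
  have k_lower: "1 / (2 * ?a) \<le> real k" unfolding k_def by linarith
  have "real k = of_int \<lceil>1 / (2 * ?a)\<rceil>" unfolding k_def using a by simp
  then have "real k < 1 / (2 * ?a) + 1" using ceiling_correct[of "1 / (2 * ?a)"] by linarith
  moreover have "1 \<le> 1 / (2 * ?a)" using a by (simp add: field_simps)
  ultimately have k_upper: "real k \<le> 1 / ?a" by (simp add: field_simps)
  obtain gs where gs: "length gs \<le> k" "set gs \<subseteq> carrier G"
    "min (k * ?a / 2) (1/4) \<le> measure M (translates_union A gs)"
    "measure M (translates_union A gs) \<le> 1/4 + ?a"
    using greedy_translates_union[OF A a(1)] by blast
  let ?B = "translates_union A gs"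
  have "1/4 \<le> k * ?a / 2" using k_lower a by (simp add: field_simps)
  then have lower: "1/4 \<le> measure M ?B" using gs(3) by (simp add: min_def split: if_splits)
  have upper: "measure M ?B \<le> 3/4" using gs(4) a by simp
  have "length gs * ?a \<le> k * ?a" using gs(1) a by (intro mult_right_mono) auto
  also have "\<dots> \<le> 1" using k_upper a by (simp add: field_simps)
  finally have len: "length gs * ?a \<le> 1" .
  have "measure M (?B - set_act G ?B \<gamma>) \<le> measure M (set_act G A \<gamma> - A) / ?a"
    if \<gamma>: "\<gamma> \<in> carrier G" for \<gamma>
  proof -
    have "measure M (?B - set_act G ?B \<gamma>) \<le> length gs * measure M (set_act G A \<gamma> - A)"
      using translates_union_boundary[OF A gs(2) \<gamma>] measure_Diff_set_act_sym[OF \<gamma> A] by simp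
    also have "\<dots> \<le> measure M (set_act G A \<gamma> - A) / ?a"
      using mult_right_mono[OF len, of "measure M (set_act G A \<gamma> - A)"] a
      by (simp add: field_simps)
    finally show ?thesis .
  qed
  then show ?thesis using translates_union_sets[OF A gs(2)] lower upper by blast
qed

subsection \<open>Strong ergodicity versus spectral gap\<close>

text \<open>
  Strong ergodicity implies spectral gap: the balanced sets built from a sequence
  violating the spectral gap are almost invariant but have \<open>\<mu>(B)(1 - \<mu>(B)) \<ge> 3/16\<close>.
\<close>
theorem strongly_ergodic_imp_spectral_gap:
  assumes se: "strongly_ergodic G M"
  shows "spectral_gap G M"
  unfolding spectral_gap_def
proof
  assume "\<exists>A. (\<forall>n. A n \<in> sets M \<and> 0 < measure M (A n) \<and> measure M (A n) \<le> 1/2) \<and>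
      (\<forall>\<gamma>\<in>carrier G. (\<lambda>n. measure M (set_act G (A n) \<gamma> - A n) / measure M (A n)) \<longlonglongrightarrow> 0)"
  then obtain A where A: "\<And>n. A n \<in> sets M" "\<And>n. 0 < measure M (A n)" "\<And>n. measure M (A n) \<le> 1/2"
    and lim: "\<And>\<gamma>. \<gamma> \<in> carrier G \<Longrightarrow>
      (\<lambda>n. measure M (set_act G (A n) \<gamma> - A n) / measure M (A n)) \<longlonglongrightarrow> 0"
    by blast
  obtain B where B: "\<And>n. B n \<in> sets M" "\<And>n. 1/4 \<le> measure M (B n)" "\<And>n. measure M (B n) \<le> 3/4"
    and B_boundary: "\<And>n \<gamma>. \<gamma> \<in> carrier G \<Longrightarrow> measure M (B n - set_act G (B n) \<gamma>)
      \<le> measure M (set_act G (A n) \<gamma> - A n) / measure M (A n)"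
    using balanced_almost_invariant_set[OF A] by metis
  have "(\<lambda>n. measure M (B n - set_act G (B n) \<gamma>)) \<longlonglongrightarrow> 0" if \<gamma>: "\<gamma> \<in> carrier G" for \<gamma>
    by (rule real_tendsto_sandwich[OF _ _ tendsto_const lim[OF \<gamma>]])
      (use B_boundary[OF \<gamma>] in auto)
  then have "(\<lambda>n. measure M (B n) * (1 - measure M (B n))) \<longlonglongrightarrow> 0"
    using se B(1) unfolding strongly_ergodic_def by blast
  moreover have "3/16 \<le> measure M (B n) * (1 - measure M (B n))" for n
    using balanced_variance_bound B(2,3) by blast
  ultimately have "3/16 \<le> (0::real)" by (intro LIMSEQ_le_const) auto
  then show False by simp
qed

text \<open>
  Almost invariant sets whose measure stays away from 0 and 1 violate the spectral gap:
  pass to complements where needed to make the measures at most \<open>1/2\<close>.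
\<close>
lemma no_spectral_gap:
  assumes A: "\<And>n. A n \<in> sets M"
    and inv: "\<And>\<gamma>. \<gamma> \<in> carrier G \<Longrightarrow> (\<lambda>n. measure M (A n - set_act G (A n) \<gamma>)) \<longlonglongrightarrow> 0"
    and e: "e > 0" "\<And>n. e \<le> measure M (A n) * (1 - measure M (A n))"
  shows "\<not> spectral_gap G M"
proof -
  define C where "C n = (if measure M (A n) \<le> 1/2 then A n else Bd - A n)" for n
  have C: "C n \<in> sets M" for n unfolding C_def using A boundary_sets by auto
  have "e \<le> measure M (A n)" "e \<le> 1 - measure M (A n)" for n
    using e(2)[of n] P.prob_le_1[of "A n"] measure_nonneg[of M "A n"]
    by (smt (verit) mult_left_le mult_left_le_one_le)+
  then have C_bounds: "e \<le> measure M (C n)" "measure M (C n) \<le> 1/2" for n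
    unfolding C_def using measure_compl[OF A] by auto
  have C_boundary: "measure M (set_act G (C n) \<gamma> - C n) = measure M (A n - set_act G (A n) \<gamma>)"
    if \<gamma>: "\<gamma> \<in> carrier G" for n \<gamma>
    unfolding C_def
    using measure_Diff_set_act_sym[OF \<gamma> A] set_act_compl_Diff[OF \<gamma> A] by simp
  have "(\<lambda>n. measure M (set_act G (C n) \<gamma> - C n) / measure M (C n)) \<longlonglongrightarrow> 0"
    if \<gamma>: "\<gamma> \<in> carrier G" for \<gamma>
  proof (rule real_tendsto_sandwich[OF _ _ tendsto_const tendsto_divide_zero[OF inv[OF \<gamma>], of e]])
    show "\<forall>\<^sub>F n in sequentially. 0 \<le> measure M (set_act G (C n) \<gamma> - C n) / measure M (C n)"
      by simp
    have "measure M (set_act G (C n) \<gamma> - C n) / measure M (C n)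
        \<le> measure M (A n - set_act G (A n) \<gamma>) / e" for n
      unfolding C_boundary[OF \<gamma>] using C_bounds(1)[of n] e(1) by (intro divide_left_mono) auto
    then show "\<forall>\<^sub>F n in sequentially. measure M (set_act G (C n) \<gamma> - C n) / measure M (C n)
        \<le> measure M (A n - set_act G (A n) \<gamma>) / e" by simp
  qed
  moreover have "0 < measure M (C n)" for n using C_bounds(1)[of n] e(1) by linarith
  ultimately show ?thesis unfolding spectral_gap_def using C C_bounds(2) by blast
qed

text \<open>A spectral gap implies ergodicity: an invariant set of intermediate measure,
  repeated as a constant sequence, would be almost invariant.\<close>
lemma spectral_gap_imp_ergodic:
  assumes gap: "spectral_gap G M"
  shows "boundary_ergodic G M"
  unfolding boundary_ergodic_def
proof (intro ballI impI)
  fix A assume A: "A \<in> sets M" and invariant: "\<forall>\<gamma>\<in>carrier G. set_act G A \<gamma> = A"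
  show "measure M A = 0 \<or> measure M A = 1"
  proof (rule ccontr)
    assume "\<not> ?thesis"
    then have "0 < measure M A" "measure M A < 1"
      using P.prob_le_1[of A] measure_nonneg[of M A] by linarith+
    then have "0 < measure M A * (1 - measure M A)" by simp
    moreover have "(\<lambda>n. measure M (A - set_act G A \<gamma>)) \<longlonglongrightarrow> 0" if "\<gamma> \<in> carrier G" for \<gamma>
      using invariant that by simp
    ultimately show False
      using no_spectral_gap[of "\<lambda>_. A"] A gap by blast
  qed
qed

text \<open>
  Spectral gap implies strong ergodicity: a subsequence along which
  \<open>\<mu>(A\<^sub>n)(1 - \<mu>(A\<^sub>n))\<close> stays away from 0 would contradict it.
\<close>
theorem spectral_gap_imp_strongly_ergodic:
  assumes gap: "spectral_gap G M"
  shows "strongly_ergodic G M"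
  unfolding strongly_ergodic_def
proof (intro conjI allI impI)
  show "boundary_ergodic G M" using spectral_gap_imp_ergodic[OF gap] .
next
  fix A :: "nat \<Rightarrow> (nat \<Rightarrow> 'a set) set"
  assume A: "\<forall>n. A n \<in> sets M"
    and inv: "\<forall>\<gamma>\<in>carrier G. (\<lambda>n. measure M (A n - set_act G (A n) \<gamma>)) \<longlonglongrightarrow> 0"
  show "(\<lambda>n. measure M (A n) * (1 - measure M (A n))) \<longlonglongrightarrow> 0"
  proof (rule ccontr)
    assume not_null: "\<not> ?thesis"
    obtain e and \<sigma> :: "nat \<Rightarrow> nat" where e: "e > 0" and \<sigma>: "strict_mono \<sigma>"
      and bound: "\<And>k. e \<le> \<bar>measure M (A (\<sigma> k)) * (1 - measure M (A (\<sigma> k)))\<bar>"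
      using subsequence_bounded_away[OF not_null] by blast
    have "(\<lambda>k. measure M (A (\<sigma> k) - set_act G (A (\<sigma> k)) \<gamma>)) \<longlonglongrightarrow> 0"
      if "\<gamma> \<in> carrier G" for \<gamma>
      using LIMSEQ_subseq_LIMSEQ[OF inv[rule_format, OF that] \<sigma>] by (simp add: comp_def)
    moreover have "e \<le> measure M (A (\<sigma> k)) * (1 - measure M (A (\<sigma> k)))" for k
      using bound[of k] P.prob_le_1[of "A (\<sigma> k)"] measure_nonneg[of M "A (\<sigma> k)"] by simp
    ultimately show False
      using no_spectral_gap[of "\<lambda>k. A (\<sigma> k)"] A e gap by blast
  qed
qed

end

lemma boundary_action_intro:
  assumes "fin_gen_group G" "normal_fi_chain G \<Gamma>" "is_boundary_measure G \<Gamma> M"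
  shows "boundary_action G \<Gamma> M"
  using assms unfolding fin_gen_group_def
  by (intro boundary_action.intro boundary_action_axioms.intro) auto

theorem theorem4:
  fixes G :: "('a, 'b) monoid_scheme" and \<Gamma> :: "nat \<Rightarrow> 'a set"
    and M :: "(nat \<Rightarrow> 'a set) measure"
  assumes "fin_gen_group G"
    and "normal_fi_chain G \<Gamma>"
    and "is_boundary_measure G \<Gamma> M"
  shows "strongly_ergodic G M \<longleftrightarrow> spectral_gap G M"
proof -
  interpret boundary_action G \<Gamma> M using boundary_action_intro[OF assms] .
  show ?thesis using strongly_ergodic_imp_spectral_gap spectral_gap_imp_strongly_ergodic by blast
qed

end
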